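(* Let $\Gamma$ be a temporal theory and $M$ a total THT model, and let $\mathrm{Th}(M):=\{\varphi\mid M,(0,0)\models\varphi\}$. The following are equivalent: (1) $M$ is a temporal equilibrium model of $\Gamma$; (2) for every temporal formula $\varphi$: $\Gamma\cup\{\neg\psi\mid\psi\notin\mathrm{Th}(M)\}\models_{\mathrm{THT}}\varphi$ iff $\varphi\in\mathrm{Th}(M)$.
   Context: Fix a countable set $\mathbb{P}$ of atoms. Temporal formulas: $\varphi ::= p\mid\bot\mid\varphi\wedge\varphi\mid\varphi\vee\varphi\mid\varphi\to\varphi\mid\circ\varphi\mid\varphi\,\mathsf{U}\,\varphi\mid\varphi\,\mathsf{R}\,\varphi$; $\neg\varphi:=\varphi\to\bot$. The THT frame is $W=\mathbb{N}\times\{0,1\}$, $(i,h)\preccurlyeq(j,t)$ iff $i=j$ and $h\le t$, $S((i,k))=(i+1,k)$. A THT model is $((W,\preccurlyeq,S),V)$ with $V:W\to2^{\mathbb{P}}$ and $V((i,0))\subseteq V((i,1))$. Satisfaction: $M,w\models p$ iff $p\in V(w)$; $\bot$ never; $\wedge,\vee$ pointwise; $M,w\models\varphi\to\psi$ iff for all $v\succcurlyeq w$, $M,v\models\varphi$ implies $M,v\models\psi$; $M,w\models\circ\varphi$ iff $M,S(w)\models\varphi$; $\varphi\,\mathsf{U}\,\psi$: some $k\ge0$ with $M,S^k(w)\models\psi$ and $M,S^i(w)\models\varphi$ for all $0\le i<k$; $\varphi\,\mathsf{R}\,\psi$: for all $k\ge0$, $M,S^k(w)\models\psi$ or $M,S^i(w)\models\varphi$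 for some $0\le i<k$. $M$ is total if $V((i,0))=V((i,1))$ for all $i$. $M'\le M$ iff $V'((i,1))=V((i,1))$ and $V'((i,0))\subseteq V((i,0))$ for all $i$; $M'<M$ iff $M'\le M$ and $V'\ne V$. A temporal equilibrium model of $\Gamma$ is a total THT model $M$ with $M,(0,0)\models\Gamma$ such that no THT model $M'<M$ has $M',(0,0)\models\Gamma$. $\Gamma\models_{\mathrm{THT}}\varphi$ means every THT model and world satisfying all formulas of $\Gamma$ satisfies $\varphi$. *)

theory Defs
  imports Main "HOL-Library.Countable"
begin

datatype 'a tform =
    Atom 'a
  | Bot
  | And "'a tform" "'a tform"
  | Or "'a tform" "'a tform"
  | Imp "'a tform" "'a tform"
  | Next "'a tform"
  | Until "'a tform" "'a tform"
  | Release "'a tform" "'a tform"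

definition Neg :: "'a tform \<Rightarrow> 'a tform" where
  "Neg \<phi> = Imp \<phi> Bot"

text \<open>Worlds are pairs (i, k) with i :: nat and k :: bool, where False encodes 0 (here)
  and True encodes 1 (there).\<close>

type_synonym world = "nat \<times> bool"
type_synonym 'a valuation = "world \<Rightarrow> 'a set"

definition wle :: "world \<Rightarrow> world \<Rightarrow> bool" where
  "wle w v \<longleftrightarrow> fst w = fst v \<and> snd w \<le> snd v"

definition succ :: "world \<Rightarrow> world" where
  "succ w = (Suc (fst w), snd w)"

definition is_tht :: "'a valuation \<Rightarrow> bool" where
  "is_tht V \<longleftrightarrow> (\<forall>i. V (i, False) \<subseteq> V (i, True))"

fun sat :: "'a valuation \<Rightarrow> world \<Rightarrow> 'a tform \<Rightarrow> bool" where
  "sat V w (Atom p) = (p \<in> V w)"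
| "sat V w Bot = False"
| "sat V w (And \<phi> \<psi>) = (sat V w \<phi> \<and> sat V w \<psi>)"
| "sat V w (Or \<phi> \<psi>) = (sat V w \<phi> \<or> sat V w \<psi>)"
| "sat V w (Imp \<phi> \<psi>) = (\<forall>v. wle w v \<longrightarrow> sat V v \<phi> \<longrightarrow> sat V v \<psi>)"
| "sat V w (Next \<phi>) = sat V (succ w) \<phi>"
| "sat V w (Until \<phi> \<psi>) =
     (\<exists>k. sat V ((succ ^^ k) w) \<psi> \<and> (\<forall>i<k. sat V ((succ ^^ i) w) \<phi>))"
| "sat V w (Release \<phi> \<psi>) =
     (\<forall>k. sat V ((succ ^^ k) w) \<psi> \<or> (\<exists>i<k. sat V ((succ ^^ i) w) \<phi>))"

definition is_total :: "'a valuation \<Rightarrow> bool" where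
  "is_total V \<longleftrightarrow> (\<forall>i. V (i, False) = V (i, True))"

definition model_le :: "'a valuation \<Rightarrow> 'a valuation \<Rightarrow> bool" where
  "model_le V' V \<longleftrightarrow> (\<forall>i. V' (i, True) = V (i, True) \<and> V' (i, False) \<subseteq> V (i, False))"

definition model_less :: "'a valuation \<Rightarrow> 'a valuation \<Rightarrow> bool" where
  "model_less V' V \<longleftrightarrow> model_le V' V \<and> V' \<noteq> V"

text \<open>Valuations of THT models are only meaningful on worlds; since the type world is
  exactly the set of worlds, V' \<noteq> V is inequality of valuations.\<close>

definition temporal_equilibrium :: "'a tform set \<Rightarrow> 'a valuation \<Rightarrow> bool" where
  "temporal_equilibrium \<Gamma> V \<longleftrightarrow>
     is_tht V \<and> is_total V \<and> (\<forall>\<gamma>\<in>\<Gamma>. sat V (0, False) \<gamma>) \<and>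
     \<not> (\<exists>V'. is_tht V' \<and> model_less V' V \<and> (\<forall>\<gamma>\<in>\<Gamma>. sat V' (0, False) \<gamma>))"

definition tht_entails :: "'a tform set \<Rightarrow> 'a tform \<Rightarrow> bool" where
  "tht_entails \<Gamma> \<phi> \<longleftrightarrow>
     (\<forall>V w. is_tht V \<longrightarrow> (\<forall>\<gamma>\<in>\<Gamma>. sat V w \<gamma>) \<longrightarrow> sat V w \<phi>)"

definition Th :: "'a valuation \<Rightarrow> 'a tform set" where
  "Th V = {\<phi>. sat V (0, False) \<phi>}"

end

theory Submission
  imports Defs
begin

(* Write \<Delta> = \<Gamma> \<union> {\<not>\<psi> | \<psi> \<notin> Th M}.  Since M is total, M satisfies every \<not>\<psi> with
   \<psi> \<notin> Th M, and every model of \<Delta> agrees with M on its "there" component, because the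
   formulas \<circ>^j p and \<not>\<circ>^j p pin down each atom at each instant.  Hence the models of \<Delta> at
   the initial instant are exactly the THT models V \<le> M satisfying \<Gamma>.  If M is in
   equilibrium, such a V is M itself (or is evaluated only at "there", where it agrees
   with M), so \<Delta> entails exactly Th M.  Conversely, a model V < M of \<Gamma> would be a model of
   \<Delta> missing some \<circ>^j p \<in> Th M. *)

lemma funpow_succ [simp]: "(succ ^^ k) (i, h) = (i + k, h)"
  by (induction k) (auto simp: succ_def)

lemma sat_Imp_at: "sat V (i, h) (Imp \<phi> \<psi>) \<longleftrightarrow> (\<forall>h'\<ge>h. sat V (i, h') \<phi> \<longrightarrow> sat V (i, h') \<psi>)"
  by (auto simp: wle_def)

lemma sat_Next_at [simp]: "sat V (i, h) (Next \<phi>) \<longleftrightarrow> sat V (Suc i, h) \<phi>"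
  by (simp add: succ_def)

lemma sat_Until_at [simp]:
  "sat V (i, h) (Until \<phi> \<psi>) \<longleftrightarrow> (\<exists>k. sat V (i + k, h) \<psi> \<and> (\<forall>j<k. sat V (i + j, h) \<phi>))"
  by simp

lemma sat_Release_at [simp]:
  "sat V (i, h) (Release \<phi> \<psi>) \<longleftrightarrow> (\<forall>k. sat V (i + k, h) \<psi> \<or> (\<exists>j<k. sat V (i + j, h) \<phi>))"
  by simp

declare sat.simps(5-8) [simp del]

lemma sat_Imp_there [simp]:
  "sat V (i, True) (Imp \<phi> \<psi>) \<longleftrightarrow> (sat V (i, True) \<phi> \<longrightarrow> sat V (i, True) \<psi>)"
  by (auto simp: sat_Imp_at)

lemma sat_Imp_here [simp]:
  "sat V (i, False) (Imp \<phi> \<psi>) \<longleftrightarrow>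
    (sat V (i, False) \<phi> \<longrightarrow> sat V (i, False) \<psi>) \<and> (sat V (i, True) \<phi> \<longrightarrow> sat V (i, True) \<psi>)"
  by (auto simp: sat_Imp_at all_bool_eq)

lemma sat_Neg_there [simp]: "sat V (i, True) (Neg \<psi>) \<longleftrightarrow> \<not> sat V (i, True) \<psi>"
  by (simp add: Neg_def)

lemma sat_Neg_here [simp]:
  "sat V (i, False) (Neg \<psi>) \<longleftrightarrow> \<not> sat V (i, False) \<psi> \<and> \<not> sat V (i, True) \<psi>"
  by (simp add: Neg_def)

lemma sat_here_imp_there:
  assumes "is_tht V"
  shows "sat V (i, False) \<phi> \<Longrightarrow> sat V (i, True) \<phi>"
proof (induction \<phi> arbitrary: i)
  case (Atom p)
  then show ?case using assms by (auto simp: is_tht_def)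
qed (simp; blast)+

lemma sat_there_cong:
  assumes "\<forall>j. V (j, True) = W (j, True)"
  shows "sat V (i, True) \<phi> \<longleftrightarrow> sat W (i, True) \<phi>"
  using assms by (induction \<phi> arbitrary: i) auto

lemma sat_total_here_iff_there:
  assumes "is_total V"
  shows "sat V (i, False) \<phi> \<longleftrightarrow> sat V (i, True) \<phi>"
  using assms by (induction \<phi> arbitrary: i) (auto simp: is_total_def all_bool_eq)

definition shift :: "nat \<Rightarrow> 'a valuation \<Rightarrow> 'a valuation" where
  "shift i V = (\<lambda>(j, h). V (i + j, h))"

lemma sat_shift: "sat (shift i V) (j, h) \<phi> \<longleftrightarrow> sat V (i + j, h) \<phi>"
  by (induction \<phi> arbitrary: j h) (simp_all add: shift_def sat_Imp_at add.assoc)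

lemma is_tht_shift: "is_tht V \<Longrightarrow> is_tht (shift i V)"
  by (simp add: is_tht_def shift_def)

definition Nexts :: "nat \<Rightarrow> 'a \<Rightarrow> 'a tform" where
  "Nexts k p = (Next ^^ k) (Atom p)"

lemma sat_Nexts [simp]: "sat V (i, h) (Nexts k p) \<longleftrightarrow> p \<in> V (i + k, h)"
  unfolding Nexts_def by (induction k arbitrary: i) auto

definition neg_compl :: "'a valuation \<Rightarrow> 'a tform set" where
  "neg_compl M = {Neg \<psi> | \<psi>. \<psi> \<notin> Th M}"

lemma sat_neg_compl_if_there_eq:
  assumes "is_tht V" and "is_total M" and "\<forall>j. V (j, True) = M (j, True)"
    and "\<gamma> \<in> neg_compl M"
  shows "sat V (0, h) \<gamma>"
proof -
  obtain \<psi> where \<gamma>: "\<gamma> = Neg \<psi>" and "\<not> sat M (0, False) \<psi>"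
    using assms(4) by (auto simp: neg_compl_def Th_def)
  then have "\<not> sat V (0, True) \<psi>"
    using sat_total_here_iff_there[OF assms(2)] sat_there_cong[OF assms(3)] by blast
  then show ?thesis
    using sat_here_imp_there[OF assms(1)] by (cases h) (auto simp: \<gamma>)
qed

lemma neg_compl_fixes_there:
  assumes "is_total M" and "\<forall>\<gamma>\<in>neg_compl M. sat V (i, True) \<gamma>"
  shows "V (i + j, True) = M (j, True)"
proof (intro set_eqI iffI)
  fix p
  have M_here: "M (j, False) = M (j, True)"
    using assms(1) by (simp add: is_total_def)
  show "p \<in> M (j, True)" if "p \<in> V (i + j, True)"
  proof (rule ccontr)
    assume "p \<notin> M (j, True)"
    then have "Neg (Nexts j p) \<in> neg_compl M"
      using M_here by (auto simp: neg_compl_def Th_def)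
    then show False
      using assms(2) that by auto
  qed
  show "p \<in> V (i + j, True)" if "p \<in> M (j, True)"
  proof -
    have "Neg (Neg (Nexts j p)) \<in> neg_compl M"
      using that M_here by (auto simp: neg_compl_def Th_def)
    then show ?thesis
      using assms(2) by auto
  qed
qed

lemma model_le_if_there_eq:
  assumes "is_tht V" and "is_total M" and "\<forall>j. V (j, True) = M (j, True)"
  shows "model_le V M"
  using assms by (auto simp: model_le_def is_tht_def is_total_def)

lemma model_less_here_gap:
  assumes "model_less V M"
  obtains j p where "p \<in> M (j, False)" and "p \<notin> V (j, False)"
proof -
  have le: "model_le V M" and "V \<noteq> M"
    using assms by (simp_all add: model_less_def)
  then obtain j h where "V (j, h) \<noteq> M (j, h)"
    by (metis ext surj_pair)
  with le have "\<not> M (j, False) \<subseteq> V (j, False)"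
    by (cases h) (auto simp: model_le_def)
  then show thesis
    using that by blast
qed

lemma Th_entailed_if_equilibrium:
  assumes eq: "temporal_equilibrium \<Gamma> M" and "\<phi> \<in> Th M"
  shows "tht_entails (\<Gamma> \<union> neg_compl M) \<phi>"
  unfolding tht_entails_def
proof (intro allI impI)
  fix V :: "'a valuation" and w
  assume V: "is_tht V" and sat_\<Delta>: "\<forall>\<gamma>\<in>\<Gamma> \<union> neg_compl M. sat V w \<gamma>"
  obtain i h where w: "w = (i, h)" by fastforce
  \<comment> \<open>entailment is over all worlds; shifting by i brings w to the initial instant\<close>
  define W where "W = shift i V"
  have total: "is_total M"
    using eq by (auto simp: temporal_equilibrium_def)
  have sat_W: "sat W (0, h') \<chi> \<longleftrightarrow> sat V (i, h') \<chi>" for h' \<chi>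
    by (simp add: W_def sat_shift)
  have there: "\<forall>j. W (j, True) = M (j, True)"
  proof
    fix j
    have "\<forall>\<gamma>\<in>neg_compl M. sat V (i, True) \<gamma>"
      using sat_\<Delta> sat_here_imp_there[OF V] by (cases h) (auto simp: w)
    then show "W (j, True) = M (j, True)"
      using neg_compl_fixes_there[OF total] by (simp add: W_def shift_def)
  qed
  have "sat W (0, h) \<phi>"
  proof (cases h)
    case True
    then show ?thesis
      using assms(2) sat_total_here_iff_there[OF total] sat_there_cong[OF there]
      by (simp add: Th_def)
  next
    case False
    have "is_tht W" by (simp add: W_def V is_tht_shift)
    moreover have "\<forall>\<gamma>\<in>\<Gamma>. sat W (0, False) \<gamma>"
      using sat_\<Delta> False by (simp add: w sat_W)
    moreover have "model_le W M"
      using \<open>is_tht W\<close> total there by (rule model_le_if_there_eq)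
    ultimately have "W = M"
      using eq by (auto simp: temporal_equilibrium_def model_less_def)
    then show ?thesis using False assms(2) by (simp add: Th_def)
  qed
  then show "sat V w \<phi>" by (simp add: w sat_W)
qed

lemma equilibrium_if_entails_exactly_Th:
  assumes "is_tht M" and total: "is_total M"
    and entails_iff: "\<forall>\<phi>. tht_entails (\<Gamma> \<union> neg_compl M) \<phi> \<longleftrightarrow> \<phi> \<in> Th M"
  shows "temporal_equilibrium \<Gamma> M"
proof -
  have "\<Gamma> \<subseteq> Th M"
    using entails_iff by (auto simp: tht_entails_def)
  moreover have False
    if V: "is_tht V" and less: "model_less V M" and sat_\<Gamma>: "\<forall>\<gamma>\<in>\<Gamma>. sat V (0, False) \<gamma>" for V
  proof -
    have there: "\<forall>j. V (j, True) = M (j, True)"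
      using less by (simp add: model_less_def model_le_def)
    obtain j p where p: "p \<in> M (j, False)" "p \<notin> V (j, False)"
      using less by (rule model_less_here_gap)
    have "\<forall>\<gamma>\<in>\<Gamma> \<union> neg_compl M. sat V (0, False) \<gamma>"
      using sat_\<Gamma> sat_neg_compl_if_there_eq[OF V total there] by blast
    moreover have "tht_entails (\<Gamma> \<union> neg_compl M) (Nexts j p)"
      using entails_iff p(1) by (simp add: Th_def)
    ultimately have "sat V (0, False) (Nexts j p)"
      using V unfolding tht_entails_def by blast
    then show False
      using p(2) by simp
  qed
  ultimately show ?thesis
    using assms(1,2) by (auto simp: temporal_equilibrium_def Th_def)
qed

theorem lemma5p2:
  fixes \<Gamma> :: "('a::countable) tform set" and M :: "'a valuation"
  assumes "is_tht M" and "is_total M"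
  shows "temporal_equilibrium \<Gamma> M \<longleftrightarrow>
    (\<forall>\<phi>. tht_entails (\<Gamma> \<union> {Neg \<psi> | \<psi>. \<psi> \<notin> Th M}) \<phi> \<longleftrightarrow> \<phi> \<in> Th M)"
proof -
  have "temporal_equilibrium \<Gamma> M \<longleftrightarrow>
    (\<forall>\<phi>. tht_entails (\<Gamma> \<union> neg_compl M) \<phi> \<longleftrightarrow> \<phi> \<in> Th M)"
  proof
    assume eq: "temporal_equilibrium \<Gamma> M"
    have "\<forall>\<gamma>\<in>\<Gamma> \<union> neg_compl M. sat M (0, False) \<gamma>"
      using eq sat_neg_compl_if_there_eq[OF assms] by (auto simp: temporal_equilibrium_def)
    then have "tht_entails (\<Gamma> \<union> neg_compl M) \<phi> \<Longrightarrow> \<phi> \<in> Th M" for \<phi>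
      using assms(1) by (auto simp: tht_entails_def Th_def)
    then show "\<forall>\<phi>. tht_entails (\<Gamma> \<union> neg_compl M) \<phi> \<longleftrightarrow> \<phi> \<in> Th M"
      using Th_entailed_if_equilibrium[OF eq] by blast
  qed (rule equilibrium_if_entails_exactly_Th[OF assms])
  then show ?thesis by (simp only: neg_compl_def)
qed

end
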